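(* Let $\Omega\subset\mathbb{P}(\mathbb{R}^d)$ be a properly convex domain and let $g_n\in\mathrm{SL}^{\pm}(d,\mathbb{R})$ be a sequence with $g_n\Omega=\Omega$ for all $n$ and $\mu_{1,2}(g_n)\to\infty$. Then for every $x\in\Omega$, the set of accumulation points in $\mathbb{P}(\mathbb{R}^d)$ of the sequence $g_nx$ equals the set of accumulation points of the sequence $E_1^+(g_n)$.
   Context: A properly convex domain is the projectivization of an open convex cone whose closure lies in an affine chart. For $g\in\mathrm{GL}(d,\mathbb{R})$, $\sigma_1(g)\ge\dots\ge\sigma_d(g)$ are the eigenvalues of $\sqrt{gg^T}$ and $\mu_{1,2}(g)=\log\sigma_1(g)-\log\sigma_2(g)$. If $\sigma_1(g)>\sigma_2(g)$, $E_1^+(g)\in\mathbb{P}(\mathbb{R}^d)$ is the line spanned by the longest axis of the ellipsoid $\{gv:\|v\|=1\}$ (defined for all large $n$ here). *)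

theory Defs
  imports "HOL-Analysis.Analysis" "HOL-Computational_Algebra.Polynomial" "HOL-Library.Multiset"
begin

text \<open>A point [v] of P(R^d) (v nonzero) is represented by the orthogonal projection
  matrix onto the line spanned by v. This map is a homeomorphism of P(R^d) onto its
  (closed) image in the space of d x d matrices, so accumulation points in P(R^d)
  correspond exactly to accumulation points in the matrix space.\<close>

definition proj_pt :: "real^'n \<Rightarrow> real^'n^'n" where
  "proj_pt v = (\<chi> i j. v$i * v$j / (norm v)\<^sup>2)"

definition proj_act :: "real^'n^'n \<Rightarrow> real^'n^'n \<Rightarrow> real^'n^'n" where
  "proj_act g p = proj_pt (g *v (SOME u. u \<noteq> 0 \<and> proj_pt u = p))"

text \<open>Properly convex domain: projectivization of an open convex cone whose closure
  (minus the origin) lies in an affine chart {v. w \<bullet> v \<noteq> 0}.\<close>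
definition open_convex_cone :: "(real^'n) set \<Rightarrow> bool" where
  "open_convex_cone C \<longleftrightarrow> open C \<and> convex C \<and> C \<noteq> {} \<and> 0 \<notin> C \<and>
     (\<forall>v\<in>C. \<forall>t::real. t > 0 \<longrightarrow> t *\<^sub>R v \<in> C)"

definition properly_convex_domain :: "(real^'n^'n) set \<Rightarrow> bool" where
  "properly_convex_domain \<Omega> \<longleftrightarrow>
     (\<exists>C. open_convex_cone C \<and> \<Omega> = proj_pt ` C \<and>
          (\<exists>w::real^'n. \<forall>u \<in> closure C - {0}. w \<bullet> u \<noteq> 0))"

definition charpoly :: "real^'n^'n \<Rightarrow> real poly" where
  "charpoly A = det (\<chi> i j. (if i = j then [:0, 1:] else 0) - [:A$i$j:])"

definition eigs_desc :: "real^'n^'n \<Rightarrow> real list" where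
  "eigs_desc A = rev (sorted_list_of_multiset (proots (charpoly A)))"

text \<open>sigma k g (k >= 1) is the k-th largest eigenvalue of sqrt(g g^T), i.e. the
  square root of the k-th largest eigenvalue of g g^T (counted with multiplicity).\<close>
definition sigma :: "nat \<Rightarrow> real^'n^'n \<Rightarrow> real" where
  "sigma k g = sqrt (eigs_desc (g ** transpose g) ! (k - 1))"

definition mu12 :: "real^'n^'n \<Rightarrow> real" where
  "mu12 g = ln (sigma 1 g) - ln (sigma 2 g)"

text \<open>E_1^+(g): the line spanned by the longest axis of the ellipsoid {g v. |v| = 1},
  i.e. spanned by g v for a unit vector v maximizing |g v| (unique up to sign when
  sigma_1 > sigma_2).\<close>
definition E1 :: "real^'n^'n \<Rightarrow> real^'n^'n" where
  "E1 g = proj_pt (g *v (SOME v. norm v = 1 \<and> (\<forall>w. norm w = 1 \<longrightarrow> norm (g *v w) \<le> norm (g *v v))))"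

definition acc_pts :: "(nat \<Rightarrow> 'a::metric_space) \<Rightarrow> 'a set" where
  "acc_pts s = {L. \<exists>r. strict_mono r \<and> (s \<circ> r) \<longlonglongrightarrow> L}"

end

theory Submission
  imports Defs
begin

text \<open>Let \<open>w\<^sub>n\<close> be a unit vector maximising \<open>|g\<^sub>n w|\<close>, so that \<open>E\<^sub>1\<^sup>+(g\<^sub>n) = [g\<^sub>n w\<^sub>n]\<close>,
  and put \<open>h\<^sub>n = g\<^sub>n / |g\<^sub>n w\<^sub>n|\<close>. Since \<open>\<sigma>\<^sub>2/\<sigma>\<^sub>1 \<longrightarrow> 0\<close>, the maps \<open>h\<^sub>n\<close> contract the
  orthogonal complement of \<open>w\<^sub>n\<close> to zero, so \<open>h\<^sub>n x \<approx> \<langle>x, w\<^sub>n\<rangle> h\<^sub>n w\<^sub>n\<close>, and the lines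
  \<open>[g\<^sub>n x]\<close> and \<open>E\<^sub>1\<^sup>+(g\<^sub>n)\<close> are asymptotic as soon as \<open>\<langle>x, w\<^sub>n\<rangle>\<close> stays away from zero
  for a vector \<open>x\<close> of the open cone \<open>C\<close> over \<open>\<Omega>\<close>. Otherwise a subsequence of \<open>h\<^sub>n\<close>
  converges to a rank one map \<open>z \<mapsto> \<langle>z, w\<rangle> p\<close> with \<open>\<langle>x, w\<rangle> = 0\<close>. But each \<open>h\<^sub>n\<close> maps
  \<open>C\<close> into \<open>C \<union> -C\<close>, where a chart functional does not vanish; by convexity of \<open>C\<close> it
  then has the same sign at the images of the points \<open>x \<plusminus> s w\<close> of \<open>C\<close>, whose limits are
  the opposite vectors \<open>\<plusminus> s |w|\<^sup>2 p\<close>.\<close>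

section \<open>Points of projective space\<close>

lemma proj_pt_scaleR: "c \<noteq> 0 \<Longrightarrow> proj_pt (c *\<^sub>R u) = proj_pt u"
  by (simp add: proj_pt_def vec_eq_iff power_mult_distrib flip: mult.assoc) (simp add: power2_eq_square mult_ac)

lemma proj_pt_mult_vec: "proj_pt x *v y = (inner x y / (norm x)\<^sup>2) *\<^sub>R x"
  unfolding proj_pt_def matrix_vector_mult_def inner_vec_def
  by (simp add: vec_eq_iff sum_distrib_left sum_divide_distrib mult_ac)

lemma proj_pt_mult_vec_self: "proj_pt x *v x = x"
  by (cases "x = 0") (simp_all add: proj_pt_mult_vec power2_norm_eq_inner)

text \<open>No hypothesis on \<open>y\<close> is needed: \<open>proj_pt 0 = 0\<close> (division by zero), whereas
  \<open>proj_pt x *v x = x\<close>.\<close>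
lemma proj_pt_eq_imp_scaleR:
  assumes "x \<noteq> 0" "proj_pt x = proj_pt y"
  obtains c where "c \<noteq> 0" "x = c *\<^sub>R y"
proof -
  have "x = (inner y x / (norm y)\<^sup>2) *\<^sub>R y"
    by (metis assms(2) proj_pt_mult_vec proj_pt_mult_vec_self)
  with assms(1) that show ?thesis by (metis scale_zero_left)
qed

lemma proj_act_proj_pt:
  assumes "y \<noteq> 0"
  shows "proj_act g (proj_pt y) = proj_pt (g *v y)"
proof -
  define u where "u = (SOME u. u \<noteq> 0 \<and> proj_pt u = proj_pt y)"
  have "u \<noteq> 0 \<and> proj_pt u = proj_pt y"
    unfolding u_def by (rule someI[of _ y]) (use assms in simp)
  then obtain c where "c \<noteq> 0" "y = c *\<^sub>R u"
    by (metis assms proj_pt_eq_imp_scaleR)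
  then have "proj_pt (g *v y) = proj_pt (g *v u)"
    by (simp add: matrix_vector_mult_scaleR proj_pt_scaleR)
  then show ?thesis unfolding proj_act_def u_def by simp
qed

lemma proj_act_scaleR: "c \<noteq> 0 \<Longrightarrow> proj_act (c *\<^sub>R g) = proj_act g"
  by (simp add: fun_eq_iff proj_act_def proj_pt_scaleR flip: scaleR_matrix_vector_assoc)

lemma continuous_on_proj_pt: "0 \<notin> K \<Longrightarrow> continuous_on K proj_pt"
  unfolding proj_pt_def by (intro continuous_intros) auto

lemma proj_pt_diff_tendsto_0:
  fixes x y :: "nat \<Rightarrow> real^'n"
  assumes lim: "(\<lambda>n. x n - y n) \<longlonglongrightarrow> 0" and bounded: "\<And>n. norm (y n) \<le> B"
    and "c > 0" and away: "eventually (\<lambda>n. c \<le> norm (y n)) sequentially"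
  shows "(\<lambda>n. proj_pt (x n) - proj_pt (y n)) \<longlonglongrightarrow> 0"
  unfolding tendsto_iff
proof (intro allI impI)
  fix \<epsilon> :: real assume "\<epsilon> > 0"
  define K where "K = cball (0::real^'n) (B + 1) - ball 0 (c / 2)"
  have "compact K" unfolding K_def by (intro compact_diff compact_cball open_ball)
  moreover have "0 \<notin> K" unfolding K_def using \<open>c > 0\<close> by simp
  ultimately have "uniformly_continuous_on K proj_pt"
    by (intro compact_uniformly_continuous continuous_on_proj_pt)
  then obtain \<delta> where "\<delta> > 0"
    and \<delta>: "\<And>u v. u \<in> K \<Longrightarrow> v \<in> K \<Longrightarrow> dist u v < \<delta> \<Longrightarrow> dist (proj_pt u) (proj_pt v) < \<epsilon>"
    using \<open>\<epsilon> > 0\<close> unfolding uniformly_continuous_on_def by metis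
  have "min \<delta> (min (c / 2) 1) > 0" using \<open>\<delta> > 0\<close> \<open>c > 0\<close> by simp
  with lim have "eventually (\<lambda>n. norm (x n - y n) < min \<delta> (min (c / 2) 1)) sequentially"
    unfolding tendsto_iff dist_norm by (simp only: diff_zero)
  with away show "eventually (\<lambda>n. dist (proj_pt (x n) - proj_pt (y n)) 0 < \<epsilon>) sequentially"
  proof eventually_elim
    case (elim n)
    have "norm (y n) \<le> norm (x n) + norm (x n - y n)"
      using norm_triangle_ineq4[of "x n" "x n - y n"] by simp
    moreover have "norm (x n) \<le> norm (y n) + norm (x n - y n)"
      using norm_triangle_ineq[of "y n" "x n - y n"] by simp
    ultimately have "x n \<in> K" "y n \<in> K" using elim bounded[of n] unfolding K_def by auto
    then show ?case using \<delta> elim by (simp add: dist_norm)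
  qed
qed

lemma acc_pts_eq_if_diff_tendsto_0:
  fixes x y :: "nat \<Rightarrow> 'a::real_normed_vector"
  assumes "(\<lambda>n. x n - y n) \<longlonglongrightarrow> 0"
  shows "acc_pts x = acc_pts y"
proof -
  have sub: "acc_pts a \<subseteq> acc_pts b" if "(\<lambda>n. a n - b n) \<longlonglongrightarrow> 0" for a b :: "nat \<Rightarrow> 'a"
  proof
    fix L assume "L \<in> acc_pts a"
    then obtain r where r: "strict_mono r" "(a \<circ> r) \<longlonglongrightarrow> L" unfolding acc_pts_def by auto
    have "(\<lambda>k. (a \<circ> r) k - ((\<lambda>n. a n - b n) \<circ> r) k) \<longlonglongrightarrow> L - 0"
      by (intro tendsto_diff r(2) LIMSEQ_subseq_LIMSEQ[OF that r(1)])
    then show "L \<in> acc_pts b" unfolding acc_pts_def using r(1) by (auto simp: comp_def)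
  qed
  have "(\<lambda>n. y n - x n) \<longlonglongrightarrow> 0"
    using tendsto_minus[OF assms] by simp
  with sub[OF assms] sub show ?thesis by blast
qed

section \<open>Cones invariant under projective maps\<close>

lemma properly_convex_domainE:
  assumes "properly_convex_domain \<Omega>"
  obtains C a where "open C" "convex C" "0 \<notin> C" "\<forall>u\<in>C. \<forall>t>0. t *\<^sub>R u \<in> C"
    "\<Omega> = proj_pt ` C" "\<forall>u \<in> closure C - {0}. inner a u \<noteq> 0"
  using assms unfolding properly_convex_domain_def open_convex_cone_def by blast

lemma inner_same_sign_on_convex:
  fixes C :: "'a::euclidean_space set"
  assumes "convex C" and nonzero: "\<forall>y\<in>C. inner a y \<noteq> 0" and "y1 \<in> C" "y2 \<in> C"
  shows "inner a y1 * inner a y2 > 0"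
proof (rule ccontr)
  assume "\<not> ?thesis"
  then have "inner a y1 \<le> 0 \<and> 0 \<le> inner a y2 \<or> inner a y2 \<le> 0 \<and> 0 \<le> inner a y1"
    by (auto simp: zero_less_mult_iff)
  then obtain z where "z \<in> C" "inner a z = 0"
    using connected_ivt_hyperplane[OF convex_connected[OF \<open>convex C\<close>], of _ _ a 0] \<open>y1 \<in> C\<close> \<open>y2 \<in> C\<close>
    by blast
  with nonzero show False by blast
qed

lemma proj_invariant_cone_image:
  fixes C :: "(real^'n) set"
  assumes cone: "\<forall>u\<in>C. \<forall>t>0. t *\<^sub>R u \<in> C" and "0 \<notin> C"
    and invariant: "proj_act h ` proj_pt ` C \<subseteq> proj_pt ` C" and "y \<in> C"
  shows "h *v y \<in> C \<union> uminus ` C"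
proof -
  have "y \<noteq> 0" using \<open>y \<in> C\<close> \<open>0 \<notin> C\<close> by auto
  have "proj_act h (proj_pt y) \<in> proj_pt ` C"
    using subsetD[OF invariant imageI[OF imageI[OF \<open>y \<in> C\<close>]]] .
  then obtain u where "u \<in> C" and u: "proj_pt u = proj_pt (h *v y)"
    unfolding proj_act_proj_pt[OF \<open>y \<noteq> 0\<close>] by auto
  moreover have "u \<noteq> 0" using \<open>u \<in> C\<close> \<open>0 \<notin> C\<close> by auto
  ultimately obtain c where "c \<noteq> 0" "u = c *\<^sub>R (h *v y)"
    using proj_pt_eq_imp_scaleR by blast
  then have hy: "h *v y = inverse c *\<^sub>R u" by simp
  show ?thesis
  proof (cases "c > 0")
    case True
    then show ?thesis using hy cone \<open>u \<in> C\<close> by simp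
  next
    case False
    with \<open>c \<noteq> 0\<close> have "- inverse c > 0" by simp
    then have "- inverse c *\<^sub>R u \<in> C" using cone \<open>u \<in> C\<close> by blast
    then show ?thesis unfolding hy by (intro UnI2 image_eqI[where x="- inverse c *\<^sub>R u"]) simp_all
  qed
qed

lemma inner_nonzero_closure_symmetrization:
  fixes C :: "(real^'n) set"
  assumes "\<forall>u \<in> closure C - {0}. inner a u \<noteq> 0" "u \<in> closure (C \<union> uminus ` C)" "u \<noteq> 0"
  shows "inner a u \<noteq> 0"
proof -
  have "closure (C \<union> uminus ` C) = closure C \<union> uminus ` closure C"
    by (simp add: closure_Un closure_injective_linear_image linear_uminus)
  then have "u \<in> closure C \<or> - u \<in> closure C" using assms(2) by force
  then show ?thesis using assms(1,3) by (metis DiffI inner_minus_right neg_equal_0_iff_equal singletonD)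
qed

text \<open>On the two points \<open>x \<plusminus> s w\<close> of the cone the chart functional takes values of
  the same sign after applying \<open>h k\<close>, but the limits \<open>\<plusminus> s |w|\<^sup>2 p\<close> have opposite signs.\<close>
lemma rank_one_limit_kernel_avoids_cone:
  fixes h :: "nat \<Rightarrow> real^'n^'n" and C :: "(real^'n) set"
  assumes "open C" "convex C" "0 \<notin> C" "x \<in> C"
    and chart: "\<forall>u \<in> closure C - {0}. inner a u \<noteq> 0"
    and maps: "\<forall>k. \<forall>y\<in>C. h k *v y \<in> C \<union> uminus ` C"
    and lim: "\<And>z. (\<lambda>k. h k *v z) \<longlonglongrightarrow> inner z w *\<^sub>R p"
    and "w \<noteq> 0" "p \<noteq> 0"
  shows "inner x w \<noteq> 0"
proof
  assume "inner x w = 0"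
  obtain \<epsilon> where "\<epsilon> > 0" and ball: "ball x \<epsilon> \<subseteq> C"
    using \<open>open C\<close> \<open>x \<in> C\<close> open_contains_ball by blast
  define s where "s = \<epsilon> / (2 * norm w)"
  have "norm (s *\<^sub>R w) < \<epsilon>" unfolding s_def using \<open>\<epsilon> > 0\<close> \<open>w \<noteq> 0\<close> by simp
  then have yC: "x + s *\<^sub>R w \<in> C" "x - s *\<^sub>R w \<in> C"
    using ball by (auto simp: dist_norm)
  define t where "t = s * inner w w"
  have "t \<noteq> 0" unfolding t_def s_def using \<open>\<epsilon> > 0\<close> \<open>w \<noteq> 0\<close> by simp
  have lim_plus: "(\<lambda>k. h k *v (x + s *\<^sub>R w)) \<longlonglongrightarrow> t *\<^sub>R p"
    using lim[of "x + s *\<^sub>R w"] \<open>inner x w = 0\<close> by (simp add: t_def inner_add_left inner_add_right inner_commute)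
  have lim_minus: "(\<lambda>k. h k *v (x - s *\<^sub>R w)) \<longlonglongrightarrow> - t *\<^sub>R p"
    using lim[of "x - s *\<^sub>R w"] \<open>inner x w = 0\<close> by (simp add: t_def inner_diff_left inner_diff_right inner_commute)
  have nonzero: "inner a u \<noteq> 0" if "u \<in> C \<union> uminus ` C" for u
    using that \<open>0 \<notin> C\<close> closure_subset[of "C \<union> uminus ` C"]
    by (intro inner_nonzero_closure_symmetrization[OF chart]) auto
  have "inner a (h k *v (x + s *\<^sub>R w)) * inner a (h k *v (x - s *\<^sub>R w)) > 0" for k
    using inner_same_sign_on_convex[OF \<open>convex C\<close> _ yC, of "a v* h k"] nonzero maps
    by (simp add: dot_lmul_matrix)
  moreover have "(\<lambda>k. inner a (h k *v (x + s *\<^sub>R w)) * inner a (h k *v (x - s *\<^sub>R w)))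
      \<longlonglongrightarrow> inner a (t *\<^sub>R p) * inner a (- t *\<^sub>R p)"
    by (intro tendsto_intros lim_plus lim_minus)
  ultimately have "0 \<le> - (inner a (t *\<^sub>R p))\<^sup>2"
    by (intro tendsto_lowerbound[where F=sequentially]) (auto intro: always_eventually less_imp_le simp: power2_eq_square)
  then have "inner a (t *\<^sub>R p) = 0" by simp
  moreover have "t *\<^sub>R p \<in> closure (C \<union> uminus ` C)"
    using maps yC lim_plus unfolding closure_sequential by (intro exI[of _ "\<lambda>k. h k *v (x + s *\<^sub>R w)"]) blast
  moreover have "t *\<^sub>R p \<noteq> 0" using \<open>t \<noteq> 0\<close> \<open>p \<noteq> 0\<close> by simp
  ultimately show False using inner_nonzero_closure_symmetrization[OF chart, of "t *\<^sub>R p"] by simp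
qed

section \<open>Singular values\<close>

lemma poly_det: "poly (det M) x = det (\<chi> i j. poly (M$i$j) x)"
  unfolding det_def by (simp add: poly_sum poly_prod)

lemma poly_charpoly: "poly (charpoly A) x = det (mat x - A)"
  unfolding charpoly_def poly_det by (intro arg_cong[where f=det]) (simp add: vec_eq_iff mat_def)

lemma mat_mult_vec: "mat x *v (v::real^'n) = x *\<^sub>R v"
  by (simp add: vec_eq_iff mat_def matrix_vector_mult_def if_distrib[where f="\<lambda>t. t * _"] cong: if_cong)

lemma det_eq_0_iff_kernel:
  fixes N :: "real^'n^'n"
  shows "det N = 0 \<longleftrightarrow> (\<exists>z. z \<noteq> 0 \<and> N *v z = 0)"
proof -
  have "det N \<noteq> 0 \<longleftrightarrow> (\<forall>z. N *v z = 0 \<longrightarrow> z = 0)"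
    by (simp add: invertible_det_nz[symmetric] invertible_left_inverse matrix_left_invertible_ker)
  then show ?thesis by blast
qed

lemma det_column_factor:
  fixes N :: "'a::comm_ring_1^'n^'n"
  assumes "\<And>i. N$i$k = c * v$i"
  shows "det N = c * det (\<chi> i j. if j = k then v$i else N$i$j)"
proof -
  have "det N = det (transpose N)" by simp
  also have "transpose N = (\<chi> i. if i = k then c *s v else row i (transpose N))"
    using assms by (simp add: vec_eq_iff transpose_def row_def)
  also have "det \<dots> = c * det (\<chi> i. if i = k then v else row i (transpose N))"
    by (rule det_row_mul)
  also have "(\<chi> i. if i = k then v else row i (transpose N)) = transpose (\<chi> i j. if j = k then v$i else N$i$j)"
    by (simp add: vec_eq_iff transpose_def row_def)
  finally show ?thesis by simp
qed

lemma det_column_replace_eq_0: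
  fixes N :: "real^'n^'n"
  assumes "N *v z = 0" "z \<noteq> 0" "z$k = 0"
  shows "det (\<chi> i j. if j = k then v$i else N$i$j) = 0"
proof -
  have "(\<chi> i j. if j = k then v$i else N$i$j) *v z = N *v z"
    using assms(3) by (auto simp: vec_eq_iff matrix_vector_mult_def intro!: sum.cong)
  with assms(1,2) show ?thesis unfolding det_eq_0_iff_kernel by auto
qed

lemma mat_minus_mult_nth: "((mat x - A) ** Q) $ i $ j = x * Q$i$j - (A ** Q)$i$j"
  for A Q :: "real^'n^'n"
  by (simp add: matrix_matrix_mult_def mat_def sum_subtractf left_diff_distrib if_distrib[where f="\<lambda>t. t * _"] cong: if_cong)

text \<open>Multiplicity two for a repeated eigenvalue is seen by splitting off the eigenvector
  \<open>p\<close> as the \<open>k\<close>-th column of an orthogonal matrix \<open>Q\<close>: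
  \<open>det (x I - A) det Q = (x - a) D(x)\<close>, where \<open>D(b) = 0\<close> because \<open>Q\<^sup>T q\<close> has vanishing
  \<open>k\<close>-th coordinate.\<close>
lemma orthogonal_eigenvalues_subseteq_proots:
  fixes A :: "real^'n^'n"
  assumes "charpoly A \<noteq> 0" and "norm p = 1" "A *v p = a *\<^sub>R p"
    and "q \<noteq> 0" "A *v q = b *\<^sub>R q" and "inner p q = 0"
  shows "{#a, b#} \<subseteq># proots (charpoly A)"
proof -
  fix k :: 'n
  obtain Q where "orthogonal_matrix Q" and Qk: "Q *v axis k 1 = p"
    using orthogonal_matrix_exists_basis \<open>norm p = 1\<close> by blast
  have Q_col: "Q$i$k = p$i" for i
    using Qk by (simp add: vec_eq_iff matrix_vector_mult_def axis_def if_distrib cong: if_cong)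
  have "det Q \<noteq> 0" using det_orthogonal_matrix[OF \<open>orthogonal_matrix Q\<close>] by auto
  define D where "D = det (\<chi> i j. if j = k then [:p$i:] else [:- (A ** Q)$i$j, Q$i$j:])"
  have poly_D: "poly D x = det (\<chi> i j. if j = k then p$i else ((mat x - A) ** Q)$i$j)" for x
    unfolding D_def poly_det by (intro arg_cong[where f=det]) (simp add: vec_eq_iff mat_minus_mult_nth mult.commute)
  have "poly (charpoly A * [:det Q:]) x = poly ([:-a, 1:] * D) x" for x
  proof -
    have "(mat x - A) *v p = (x - a) *\<^sub>R p"
      using \<open>A *v p = a *\<^sub>R p\<close> by (simp add: matrix_vector_mult_diff_rdistrib mat_mult_vec scaleR_diff_left)
    then have "((mat x - A) ** Q)$i$k = (x - a) * p$i" for i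
      by (simp add: vec_eq_iff matrix_matrix_mult_def matrix_vector_mult_def Q_col)
    then have "det ((mat x - A) ** Q) = (x - a) * poly D x"
      unfolding poly_D by (rule det_column_factor)
    then show ?thesis by (simp add: poly_charpoly det_mul algebra_simps)
  qed
  then have factor: "charpoly A * [:det Q:] = [:-a, 1:] * D"
    by (rule poly_eq_poly_eq_iff[THEN iffD1, OF ext])
  then have "D \<noteq> 0" using \<open>charpoly A \<noteq> 0\<close> \<open>det Q \<noteq> 0\<close> by auto
  have "proots (charpoly A) = proots (charpoly A * [:det Q:])"
    using \<open>charpoly A \<noteq> 0\<close> \<open>det Q \<noteq> 0\<close> by (simp add: proots_mult)
  also have "\<dots> = {#a#} + proots D"
    unfolding factor using proots_mult[OF _ \<open>D \<noteq> 0\<close>, of "[:-a, 1:]"] by simp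
  finally have proots_eq: "proots (charpoly A) = {#a#} + proots D" .
  define z where "z = transpose Q *v q"
  have "z$k = 0"
    using \<open>inner p q = 0\<close> by (simp add: z_def matrix_vector_mult_def transpose_def Q_col inner_vec_def)
  have "Q *v z = (Q ** transpose Q) *v q" unfolding z_def by (rule matrix_vector_mul_assoc)
  then have "Q *v z = q" using \<open>orthogonal_matrix Q\<close> by (simp add: orthogonal_matrix_def)
  then have "z \<noteq> 0" using \<open>q \<noteq> 0\<close> by auto
  have "((mat b - A) ** Q) *v z = 0"
    using \<open>Q *v z = q\<close> \<open>A *v q = b *\<^sub>R q\<close>
    by (simp add: matrix_vector_mul_assoc[symmetric] matrix_vector_mult_diff_rdistrib mat_mult_vec)
  then have "poly D b = 0"
    unfolding poly_D using \<open>z \<noteq> 0\<close> \<open>z$k = 0\<close> by (rule det_column_replace_eq_0)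
  then show ?thesis
    unfolding proots_eq using \<open>D \<noteq> 0\<close> by (simp add: mset_subset_eq_single)
qed

lemma rev_sorted_list_of_multiset_top_two:
  fixes M :: "'a::linorder multiset"
  assumes "{#a, b#} \<subseteq># M" "b \<le> a" "\<forall>x\<in>#M. x \<le> a"
  defines "L \<equiv> rev (sorted_list_of_multiset M)"
  shows "L ! 0 \<le> a" "b \<le> L ! 1" "L ! 1 \<le> L ! 0"
proof -
  define S where "S = sorted_list_of_multiset M"
  have "sorted S" "mset S = M" unfolding S_def by simp_all
  have "size {#a, b#} \<le> size M" using assms(1) by (rule size_mset_mono)
  then have "length S \<ge> 2" using \<open>mset S = M\<close> by (auto simp flip: size_mset)
  then have "S \<noteq> []" "1 < length S" by (auto simp flip: length_greater_0_conv)
  then have L_nth: "L ! 0 = S ! (length S - 1)" "L ! 1 = S ! (length S - 2)"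
    by (simp_all add: L_def S_def[symmetric] rev_nth numeral_2_eq_2)
  have "S ! (length S - 1) \<in> set S" using \<open>S \<noteq> []\<close> by simp
  then have "S ! (length S - 1) \<in># M" using \<open>mset S = M\<close> by auto
  then show "L ! 0 \<le> a" using assms(3) L_nth by simp
  show "L ! 1 \<le> L ! 0"
    unfolding L_nth using sorted_nth_mono[OF \<open>sorted S\<close>, of "length S - 2" "length S - 1"] \<open>length S \<ge> 2\<close> by simp
  have "mset (butlast S @ [last S]) = M"
    using \<open>mset S = M\<close> \<open>length S \<ge> 2\<close> by (subst append_butlast_last_id) auto
  then have "{#a, b#} \<subseteq># add_mset (last S) (mset (butlast S))" using assms(1) by simp
  then have "a \<in># mset (butlast S) \<or> b \<in># mset (butlast S)"
    by (cases "last S = a") (auto simp: add_mset_commute dest: mset_subset_eqD)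
  then obtain y where "y \<in> set (butlast S)" "b \<le> y" using assms(2) by auto
  then obtain j where "j < length S - 1" "S ! j = y"
    by (auto simp: in_set_conv_nth nth_butlast)
  then have "y \<le> S ! (length S - 2)"
    using \<open>sorted S\<close> \<open>length S \<ge> 2\<close> by (auto intro: sorted_nth_mono)
  then show "b \<le> L ! 1" using \<open>b \<le> y\<close> L_nth by simp
qed

lemma norm_mult_vec_le_if_unit_bound:
  fixes g :: "real^'n^'m"
  assumes "subspace S" "y \<in> S" and bound: "\<And>u. u \<in> S \<Longrightarrow> norm u = 1 \<Longrightarrow> norm (g *v u) \<le> K"
  shows "norm (g *v y) \<le> K * norm y"
proof (cases "y = 0")
  case False
  define u where "u = inverse (norm y) *\<^sub>R y"
  have "u \<in> S" "norm u = 1" using assms(1,2) False by (simp_all add: u_def subspace_scale)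
  then have "norm y * norm (g *v u) \<le> norm y * K" using bound by (simp add: mult_left_mono)
  moreover have "g *v y = norm y *\<^sub>R (g *v u)" using False by (simp add: u_def matrix_vector_mult_scaleR)
  ultimately show ?thesis by (simp add: mult.commute)
qed simp

lemma max_stretch_on_subspace_exists:
  fixes g :: "real^'n^'m"
  assumes "subspace S" "y\<^sub>0 \<in> S" "y\<^sub>0 \<noteq> 0"
  shows "\<exists>u\<in>S. norm u = 1 \<and> (\<forall>y\<in>S. norm (g *v y) \<le> norm (g *v u) * norm y)"
proof -
  have "compact (S \<inter> sphere 0 1)"
    using assms(1) by (intro closed_Int_compact closed_subspace compact_sphere)
  moreover have "inverse (norm y\<^sub>0) *\<^sub>R y\<^sub>0 \<in> S \<inter> sphere 0 1"
    using assms by (simp add: subspace_scale)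
  moreover have "continuous_on (S \<inter> sphere 0 1) (\<lambda>y. norm (g *v y))"
    by (intro continuous_intros linear_continuous_on matrix_vector_mul_linear linear_linear[THEN iffD1])
  ultimately obtain u where "u \<in> S \<inter> sphere 0 1" "\<And>y. y \<in> S \<inter> sphere 0 1 \<Longrightarrow> norm (g *v y) \<le> norm (g *v u)"
    using continuous_attains_sup[of "S \<inter> sphere 0 1" "\<lambda>y. norm (g *v y)"] by blast
  with assms(1) show ?thesis by (auto intro: norm_mult_vec_le_if_unit_bound)
qed

definition max_stretch :: "real^'n^'m \<Rightarrow> real^'n" where
  "max_stretch g = (SOME v. norm v = 1 \<and> (\<forall>w. norm w = 1 \<longrightarrow> norm (g *v w) \<le> norm (g *v v)))"

lemma E1_eq_proj_pt_max_stretch: "E1 g = proj_pt (g *v max_stretch g)"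
  unfolding E1_def max_stretch_def ..

lemma max_stretch:
  fixes g :: "real^'n^'m"
  shows "norm (max_stretch g) = 1" "norm (g *v y) \<le> norm (g *v max_stretch g) * norm y"
proof -
  have "axis undefined (1::real) \<noteq> 0" by simp
  then obtain u where "norm u = 1" and u: "\<forall>y. norm (g *v y) \<le> norm (g *v u) * norm y"
    using max_stretch_on_subspace_exists[OF subspace_UNIV UNIV_I, where g = g] by auto
  then have "norm u = 1 \<and> (\<forall>w. norm w = 1 \<longrightarrow> norm (g *v w) \<le> norm (g *v u))"
    by (metis mult_1_right)
  then have max: "norm (max_stretch g) = 1 \<and>
      (\<forall>w. norm w = 1 \<longrightarrow> norm (g *v w) \<le> norm (g *v max_stretch g))"
    unfolding max_stretch_def by (rule someI)
  then show "norm (max_stretch g) = 1" by simp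
  show "norm (g *v y) \<le> norm (g *v max_stretch g) * norm y"
    using max by (intro norm_mult_vec_le_if_unit_bound[OF subspace_UNIV UNIV_I]) simp
qed

lemma quadratic_nonneg_imp_linear_coeff_0:
  fixes a b :: real
  assumes "\<And>t. 0 \<le> a * t\<^sup>2 + b * t"
  shows "b = 0"
proof (rule ccontr)
  assume "b \<noteq> 0"
  define A where "A = \<bar>a\<bar> + 1"
  define t where "t = - b / (2 * A)"
  have "A > 0" unfolding A_def by simp
  have "a * t\<^sup>2 \<le> A * t\<^sup>2" unfolding A_def by (intro mult_right_mono) auto
  moreover have "A * t\<^sup>2 + b * t = - b\<^sup>2 / (4 * A)"
    unfolding t_def using \<open>A > 0\<close> by (simp add: field_simps power2_eq_square)
  moreover have "b\<^sup>2 / (4 * A) > 0" using \<open>b \<noteq> 0\<close> \<open>A > 0\<close> by simp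
  ultimately show False using assms[of t] by linarith
qed

text \<open>The first variation of \<open>|g u|\<^sup>2 |u + t z|\<^sup>2 - |g (u + t z)|\<^sup>2 \<ge> 0\<close> at \<open>t = 0\<close> forces
  \<open>g z \<perp> g u\<close> for \<open>z \<in> S\<close> orthogonal to \<open>u\<close>.\<close>
lemma max_stretch_eigenvector:
  fixes g :: "real^'n^'m"
  assumes "subspace S" "u \<in> S" "norm u = 1"
    and max: "\<And>y. y \<in> S \<Longrightarrow> norm (g *v y) \<le> norm (g *v u) * norm y"
    and invariant: "\<And>y. y \<in> S \<Longrightarrow> transpose g *v (g *v y) \<in> S"
  shows "transpose g *v (g *v u) = (norm (g *v u))\<^sup>2 *\<^sub>R u"
proof -
  have uu: "inner u u = 1" using \<open>norm u = 1\<close> by (simp add: norm_eq_1)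
  have orth: "- 2 * inner (g *v u) (g *v z) = 0" if "z \<in> S" "inner u z = 0" for z
  proof (rule quadratic_nonneg_imp_linear_coeff_0)
    fix t :: real
    have "u + t *\<^sub>R z \<in> S" using assms(1,2) \<open>z \<in> S\<close> by (simp add: subspace_add subspace_scale)
    then have "(norm (g *v (u + t *\<^sub>R z)))\<^sup>2 \<le> (norm (g *v u) * norm (u + t *\<^sub>R z))\<^sup>2"
      using max by (intro power_mono) simp_all
    moreover have "(norm (g *v (u + t *\<^sub>R z)))\<^sup>2
        = (norm (g *v u))\<^sup>2 + 2 * t * inner (g *v u) (g *v z) + t\<^sup>2 * (norm (g *v z))\<^sup>2"
      unfolding matrix_vector_right_distrib matrix_vector_mult_scaleR power2_norm_eq_inner
      by (simp add: inner_add_left inner_add_right inner_commute power2_eq_square algebra_simps)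
    moreover have "(norm (u + t *\<^sub>R z))\<^sup>2 = 1 + t\<^sup>2 * (norm z)\<^sup>2"
      unfolding power2_norm_eq_inner using uu \<open>inner u z = 0\<close>
      by (simp add: inner_add_left inner_add_right inner_commute power2_eq_square algebra_simps)
    ultimately show "0 \<le> ((norm (g *v u))\<^sup>2 * (norm z)\<^sup>2 - (norm (g *v z))\<^sup>2) * t\<^sup>2
        + (- 2 * inner (g *v u) (g *v z)) * t"
      by (simp add: power_mult_distrib algebra_simps)
  qed
  define r where "r = transpose g *v (g *v u) - (norm (g *v u))\<^sup>2 *\<^sub>R u"
  have "r \<in> S" unfolding r_def using assms(1,2) invariant by (simp add: subspace_diff subspace_scale)
  have "inner u (transpose g *v (g *v u)) = (norm (g *v u))\<^sup>2"
    by (simp only: transpose_matrix_vector inner_commute[of u] dot_lmul_matrix power2_norm_eq_inner)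
  then have "inner u r = 0" using uu by (simp add: r_def inner_diff_right)
  have "inner r r = inner (g *v u) (g *v r) - (norm (g *v u))\<^sup>2 * inner u r"
    by (simp add: r_def inner_diff_left dot_lmul_matrix)
  then have "inner r r = 0" using orth[OF \<open>r \<in> S\<close> \<open>inner u r = 0\<close>] \<open>inner u r = 0\<close> by simp
  then show ?thesis unfolding r_def by simp
qed

lemma charpoly_gram_root_le:
  fixes g :: "real^'n^'n"
  assumes bound: "\<And>y. norm (g *v y) \<le> K * norm y"
    and root: "poly (charpoly (g ** transpose g)) x = 0"
  shows "x \<le> K\<^sup>2"
proof -
  obtain z where "z \<noteq> 0" and eig: "(mat x - g ** transpose g) *v z = 0"
    using root unfolding poly_charpoly det_eq_0_iff_kernel by blast
  define v where "v = transpose g *v z"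
  have gv: "g *v v = x *\<^sub>R z"
    using eig unfolding v_def
    by (simp add: matrix_vector_mult_diff_rdistrib mat_mult_vec matrix_vector_mul_assoc[symmetric])
  have "0 \<le> K" using bound[of z] \<open>z \<noteq> 0\<close> by (metis norm_ge_zero order_trans zero_less_norm_iff zero_le_mult_iff not_le)
  have "(norm v)\<^sup>2 = inner z (g *v v)"
    by (simp add: v_def power2_norm_eq_inner dot_lmul_matrix)
  also have "\<dots> \<le> norm z * (K * norm v)"
    using norm_cauchy_schwarz[of z "g *v v"] bound[of v] by (meson mult_left_mono norm_ge_zero order_trans)
  finally have "norm v \<le> K * norm z"
    by (cases "v = 0") (simp_all add: power2_eq_square \<open>0 \<le> K\<close>, simp add: mult_ac)
  then have "(norm v)\<^sup>2 \<le> (K * norm z)\<^sup>2" by (intro power_mono) simp_all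
  moreover have "(norm v)\<^sup>2 = x * (norm z)\<^sup>2"
    using gv by (simp add: v_def power2_norm_eq_inner dot_lmul_matrix)
  ultimately have "x * (norm z)\<^sup>2 \<le> K\<^sup>2 * (norm z)\<^sup>2" by (simp add: power_mult_distrib)
  then show ?thesis using \<open>z \<noteq> 0\<close> by simp
qed

lemma charpoly_gram_nonzero:
  fixes g :: "real^'n^'n"
  assumes "\<And>y. norm (g *v y) \<le> K * norm y"
  shows "charpoly (g ** transpose g) \<noteq> 0"
proof
  assume "charpoly (g ** transpose g) = 0"
  then have "K\<^sup>2 + 1 \<le> K\<^sup>2" using charpoly_gram_root_le[OF assms] by simp
  then show False by simp
qed

lemma gram_eigenvector_image:
  fixes g :: "real^'n^'m"
  assumes "transpose g *v (g *v y) = c *\<^sub>R y"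
  shows "(g ** transpose g) *v (g *v y) = c *\<^sub>R (g *v y)"
  using assms by (simp add: matrix_vector_mul_assoc[symmetric] matrix_vector_mult_scaleR)

lemma max_stretch_eigenvector_UNIV:
  fixes g :: "real^'n^'m"
  shows "transpose g *v (g *v max_stretch g) = (norm (g *v max_stretch g))\<^sup>2 *\<^sub>R max_stretch g"
  using max_stretch(2)[of g]
  by (intro max_stretch_eigenvector[OF subspace_UNIV UNIV_I max_stretch(1)]) simp_all

lemma max_stretch_orthogonal_complement:
  fixes g :: "real^'n^'m"
  assumes "CARD('n) \<ge> 2"
  defines "w \<equiv> max_stretch g"
  obtains u where "norm u = 1" "inner w u = 0"
    "\<And>y. inner w y = 0 \<Longrightarrow> norm (g *v y) \<le> norm (g *v u) * norm y"
    "transpose g *v (g *v u) = (norm (g *v u))\<^sup>2 *\<^sub>R u"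
proof -
  define S where "S = {y. inner w y = 0}"
  have "subspace S" unfolding S_def by (rule subspace_hyperplane)
  have "2 \<le> DIM(real^'n)" using assms(1) by simp
  then obtain y\<^sub>0 where "y\<^sub>0 \<noteq> 0" "orthogonal w y\<^sub>0" by (rule orthogonal_to_vector_exists)
  then have "y\<^sub>0 \<in> S" by (simp add: S_def orthogonal_def)
  then obtain u where "u \<in> S" "norm u = 1" and u_max: "\<forall>y\<in>S. norm (g *v y) \<le> norm (g *v u) * norm y"
    using max_stretch_on_subspace_exists[OF \<open>subspace S\<close> _ \<open>y\<^sub>0 \<noteq> 0\<close>, of g] by blast
  have "transpose g *v (g *v y) \<in> S" if "y \<in> S" for y
  proof -
    have "inner w (transpose g *v (g *v y)) = inner (g *v w) (g *v y)"
      by (simp only: transpose_matrix_vector inner_commute[of w] dot_lmul_matrix inner_commute[of "g *v y"])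
    also have "\<dots> = inner (transpose g *v (g *v w)) y" by (simp add: dot_lmul_matrix)
    also have "\<dots> = 0" using \<open>y \<in> S\<close> unfolding w_def max_stretch_eigenvector_UNIV by (simp add: S_def w_def)
    finally show ?thesis by (simp add: S_def)
  qed
  then have "transpose g *v (g *v u) = (norm (g *v u))\<^sup>2 *\<^sub>R u"
    using u_max by (intro max_stretch_eigenvector[OF \<open>subspace S\<close> \<open>u \<in> S\<close> \<open>norm u = 1\<close>]) simp_all
  with that \<open>norm u = 1\<close> \<open>u \<in> S\<close> u_max show ?thesis by (simp add: S_def)
qed

lemma gram_top_eigenvalues:
  fixes g :: "real^'n^'n"
  assumes "CARD('n) \<ge> 2" "det g \<noteq> 0"
  defines "w \<equiv> max_stretch g"
  obtains u where "norm u = 1" "g *v u \<noteq> 0"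
    "\<And>y. inner w y = 0 \<Longrightarrow> norm (g *v y) \<le> norm (g *v u) * norm y"
    "{#(norm (g *v w))\<^sup>2, (norm (g *v u))\<^sup>2#} \<subseteq># proots (charpoly (g ** transpose g))"
proof -
  obtain u where "norm u = 1" "inner w u = 0"
    and u_max: "\<And>y. inner w y = 0 \<Longrightarrow> norm (g *v y) \<le> norm (g *v u) * norm y"
    and eig_u: "transpose g *v (g *v u) = (norm (g *v u))\<^sup>2 *\<^sub>R u"
    using max_stretch_orthogonal_complement[OF assms(1)] unfolding w_def by metis
  have "w \<noteq> 0" "u \<noteq> 0" using max_stretch(1)[of g] \<open>norm u = 1\<close> by (auto simp: w_def)
  then have "g *v w \<noteq> 0" "g *v u \<noteq> 0" using assms(2) unfolding det_eq_0_iff_kernel by auto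
  define p where "p = inverse (norm (g *v w)) *\<^sub>R (g *v w)"
  have "norm p = 1" using \<open>g *v w \<noteq> 0\<close> by (simp add: p_def)
  have "(g ** transpose g) *v p = (norm (g *v w))\<^sup>2 *\<^sub>R p"
    using gram_eigenvector_image[OF max_stretch_eigenvector_UNIV[of g]] by (simp add: p_def w_def matrix_vector_mult_scaleR)
  moreover have "inner p (g *v u) = 0"
  proof -
    have "inner (g *v w) (g *v u) = inner (transpose g *v (g *v w)) u" by (simp add: dot_lmul_matrix)
    also have "\<dots> = 0" using \<open>inner w u = 0\<close> unfolding w_def max_stretch_eigenvector_UNIV by (simp add: w_def)
    finally show ?thesis by (simp add: p_def)
  qed
  ultimately have "{#(norm (g *v w))\<^sup>2, (norm (g *v u))\<^sup>2#} \<subseteq># proots (charpoly (g ** transpose g))"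
    using orthogonal_eigenvalues_subseteq_proots[OF charpoly_gram_nonzero[OF max_stretch(2)] \<open>norm p = 1\<close> _
        \<open>g *v u \<noteq> 0\<close> gram_eigenvector_image[OF eig_u]]
    by simp
  with that \<open>norm u = 1\<close> \<open>g *v u \<noteq> 0\<close> u_max show ?thesis by blast
qed

lemma singular_value_bounds:
  fixes g :: "real^'n^'n"
  assumes "CARD('n) \<ge> 2" "det g \<noteq> 0"
  shows "0 < sigma 2 g" "sigma 2 g \<le> sigma 1 g" "sigma 1 g \<le> norm (g *v max_stretch g)"
    and "inner (max_stretch g) y = 0 \<Longrightarrow> norm (g *v y) \<le> sigma 2 g * norm y"
proof -
  define w where "w = max_stretch g"
  obtain u where "norm u = 1" "g *v u \<noteq> 0"
    and u_max: "\<And>y. inner w y = 0 \<Longrightarrow> norm (g *v y) \<le> norm (g *v u) * norm y"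
    and top: "{#(norm (g *v w))\<^sup>2, (norm (g *v u))\<^sup>2#} \<subseteq># proots (charpoly (g ** transpose g))"
    using gram_top_eigenvalues[OF assms] unfolding w_def by metis
  have "(norm (g *v u))\<^sup>2 \<le> (norm (g *v w))\<^sup>2"
    using max_stretch(2)[of g u] \<open>norm u = 1\<close> by (simp add: w_def power_mono)
  moreover have "\<forall>x\<in>#proots (charpoly (g ** transpose g)). x \<le> (norm (g *v w))\<^sup>2"
    using charpoly_gram_root_le[OF max_stretch(2)[where g = g]]
    by (cases "charpoly (g ** transpose g) = 0") (auto simp: w_def)
  ultimately have L: "eigs_desc (g ** transpose g) ! 0 \<le> (norm (g *v w))\<^sup>2"
      "(norm (g *v u))\<^sup>2 \<le> eigs_desc (g ** transpose g) ! 1"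
      "eigs_desc (g ** transpose g) ! 1 \<le> eigs_desc (g ** transpose g) ! 0"
    using rev_sorted_list_of_multiset_top_two[OF top] unfolding eigs_desc_def by blast+
  have sigma_eq: "sigma 1 g = sqrt (eigs_desc (g ** transpose g) ! 0)"
    "sigma 2 g = sqrt (eigs_desc (g ** transpose g) ! 1)"
    by (simp_all add: sigma_def)
  show "sigma 1 g \<le> norm (g *v max_stretch g)"
    using real_sqrt_le_mono[OF L(1)] unfolding sigma_eq by (simp add: w_def)
  show "sigma 2 g \<le> sigma 1 g"
    using real_sqrt_le_mono[OF L(3)] unfolding sigma_eq .
  have "norm (g *v u) \<le> sigma 2 g"
    using real_sqrt_le_mono[OF L(2)] unfolding sigma_eq by simp
  then show "0 < sigma 2 g" using \<open>g *v u \<noteq> 0\<close> by (meson less_le_trans zero_less_norm_iff)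
  show "norm (g *v y) \<le> sigma 2 g * norm y" if "inner (max_stretch g) y = 0"
    using u_max[of y] that \<open>norm (g *v u) \<le> sigma 2 g\<close>
    by (simp add: w_def) (meson mult_right_mono norm_ge_zero order_trans)
qed

section \<open>Asymptotically rank one sequences\<close>

lemma not_bounded_away_imp_tendsto_0_along:
  fixes x :: "nat \<Rightarrow> real"
  assumes "\<not> (\<exists>c>0. eventually (\<lambda>n. c \<le> \<bar>x n\<bar>) sequentially)"
  obtains r where "filterlim r sequentially sequentially" "(\<lambda>k. x (r k)) \<longlonglongrightarrow> 0"
proof -
  have "\<exists>n\<ge>k. \<bar>x n\<bar> < inverse (real (Suc k))" for k
  proof (rule ccontr)
    assume "\<not> ?thesis"
    then have "eventually (\<lambda>n. inverse (real (Suc k)) \<le> \<bar>x n\<bar>) sequentially"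
      unfolding eventually_sequentially by (meson not_less)
    moreover have "inverse (real (Suc k)) > 0" by simp
    ultimately show False using assms by blast
  qed
  then obtain r where r: "\<forall>k. k \<le> r k \<and> \<bar>x (r k)\<bar> < inverse (real (Suc k))"
    using choice[of "\<lambda>k n. k \<le> n \<and> \<bar>x n\<bar> < inverse (real (Suc k))"] by blast
  show ?thesis
  proof
    show "filterlim r sequentially sequentially"
      using r by (intro filterlim_at_top_mono[OF filterlim_ident]) simp
    show "(\<lambda>k. x (r k)) \<longlonglongrightarrow> 0"
      using r by (intro Lim_null_comparison[OF _ LIMSEQ_inverse_real_of_nat]) (simp add: less_imp_le)
  qed
qed

locale asymptotically_rank_one =
  fixes h :: "nat \<Rightarrow> real^'n^'n" and w :: "nat \<Rightarrow> real^'n" and \<rho> :: "nat \<Rightarrow> real"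
  assumes norm_w: "norm (w n) = 1"
    and norm_h_w: "norm (h n *v w n) = 1"
    and \<rho>_nonneg: "0 \<le> \<rho> n"
    and orthogonal_bound: "inner (w n) y = 0 \<Longrightarrow> norm (h n *v y) \<le> \<rho> n * norm y"
    and \<rho>_tendsto_0: "\<rho> \<longlonglongrightarrow> 0"
begin

lemma remainder_bound: "norm (h n *v z - inner z (w n) *\<^sub>R (h n *v w n)) \<le> \<rho> n * norm z"
proof -
  define y where "y = z - inner z (w n) *\<^sub>R w n"
  have ww: "inner (w n) (w n) = 1" using norm_w by (simp add: norm_eq_1)
  have "(norm y)\<^sup>2 = (norm z)\<^sup>2 - (inner z (w n))\<^sup>2"
    unfolding y_def power2_norm_eq_inner using ww
    by (simp add: inner_diff_left inner_diff_right inner_commute power2_eq_square)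
  then have "norm y \<le> norm z" using power2_le_imp_le[of "norm y" "norm z"] by simp
  have "h n *v z - inner z (w n) *\<^sub>R (h n *v w n) = h n *v y"
    unfolding y_def by (simp add: matrix_vector_mult_diff_distrib matrix_vector_mult_scaleR)
  also have "norm \<dots> \<le> \<rho> n * norm y"
    using ww by (intro orthogonal_bound) (simp add: y_def inner_diff_right inner_commute)
  also have "\<dots> \<le> \<rho> n * norm z"
    using \<open>norm y \<le> norm z\<close> \<rho>_nonneg by (rule mult_left_mono)
  finally show ?thesis .
qed

lemma remainder_tendsto_0:
  assumes "filterlim r sequentially sequentially"
  shows "(\<lambda>k. h (r k) *v z - inner z (w (r k)) *\<^sub>R (h (r k) *v w (r k))) \<longlonglongrightarrow> 0"
proof (rule Lim_null_comparison)
  show "eventually (\<lambda>k. norm (h (r k) *v z - inner z (w (r k)) *\<^sub>R (h (r k) *v w (r k)))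
      \<le> \<rho> (r k) * norm z) sequentially"
    using remainder_bound by simp
  show "(\<lambda>k. \<rho> (r k) * norm z) \<longlonglongrightarrow> 0"
    using tendsto_mult_left_zero[OF filterlim_compose[OF \<rho>_tendsto_0 assms]] by simp
qed

lemma tendsto_rank_one_along:
  assumes "filterlim r sequentially sequentially"
    and "(\<lambda>k. w (r k)) \<longlonglongrightarrow> w'" and "(\<lambda>k. h (r k) *v w (r k)) \<longlonglongrightarrow> p"
  shows "(\<lambda>k. h (r k) *v z) \<longlonglongrightarrow> inner z w' *\<^sub>R p"
proof -
  have "(\<lambda>k. inner z (w (r k)) *\<^sub>R (h (r k) *v w (r k))
      + (h (r k) *v z - inner z (w (r k)) *\<^sub>R (h (r k) *v w (r k)))) \<longlonglongrightarrow> inner z w' *\<^sub>R p + 0"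
    using tendsto_add[OF tendsto_scaleR[OF tendsto_inner[OF tendsto_const assms(2)] assms(3)]
        remainder_tendsto_0[OF assms(1)]] .
  then show ?thesis by simp
qed

text \<open>This is where proper convexity enters: otherwise a subsequence would converge to a
  rank one map whose kernel contains a point of the cone.\<close>
lemma inner_top_direction_bounded_away:
  fixes C :: "(real^'n) set"
  assumes "open C" "convex C" "0 \<notin> C" "x \<in> C"
    and chart: "\<forall>u \<in> closure C - {0}. inner a u \<noteq> 0"
    and maps: "\<forall>n. \<forall>y\<in>C. h n *v y \<in> C \<union> uminus ` C"
  shows "\<exists>c>0. eventually (\<lambda>n. c \<le> \<bar>inner x (w n)\<bar>) sequentially"
proof (rule ccontr)
  assume "\<not> ?thesis"
  then obtain r where r: "filterlim r sequentially sequentially" "(\<lambda>k. inner x (w (r k))) \<longlonglongrightarrow> 0"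
    by (rule not_bounded_away_imp_tendsto_0_along)
  have "\<forall>k. (w (r k), h (r k) *v w (r k)) \<in> sphere 0 1 \<times> sphere 0 1"
    using norm_w norm_h_w by simp
  then obtain l r' where l: "l \<in> sphere 0 1 \<times> sphere 0 1" and "strict_mono r'"
    and lim: "((\<lambda>k. (w (r k), h (r k) *v w (r k))) \<circ> r') \<longlonglongrightarrow> l"
    by (rule seq_compactE[OF compact_imp_seq_compact[OF compact_Times[OF compact_sphere compact_sphere]]])
  obtain w' p where l_eq: "l = (w', p)" by (cases l)
  define R where "R = r \<circ> r'"
  have R: "filterlim R sequentially sequentially"
    unfolding R_def using filterlim_compose[OF r(1) filterlim_subseq[OF \<open>strict_mono r'\<close>]] by (simp add: comp_def)
  have "(\<lambda>k. w (R k)) \<longlonglongrightarrow> w'" "(\<lambda>k. h (R k) *v w (R k)) \<longlonglongrightarrow> p"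
    using tendsto_fst[OF lim] tendsto_snd[OF lim] unfolding l_eq R_def by (simp_all add: comp_def)
  note lim_R = tendsto_rank_one_along[OF R this]
  have "(\<lambda>k. inner x (w (R k))) \<longlonglongrightarrow> 0"
    using filterlim_compose[OF r(2) filterlim_subseq[OF \<open>strict_mono r'\<close>]] by (simp add: R_def comp_def)
  moreover have "(\<lambda>k. inner x (w (R k))) \<longlonglongrightarrow> inner x w'"
    by (intro tendsto_intros \<open>(\<lambda>k. w (R k)) \<longlonglongrightarrow> w'\<close>)
  ultimately have "inner x w' = 0" by (rule LIMSEQ_unique[symmetric])
  moreover have "w' \<noteq> 0" "p \<noteq> 0" using l unfolding l_eq by auto
  moreover have "\<forall>k. \<forall>y\<in>C. h (R k) *v y \<in> C \<union> uminus ` C" using maps by simp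
  ultimately show False using rank_one_limit_kernel_avoids_cone[OF assms(1-4) chart _ lim_R] by simp
qed

lemma proj_pt_tendsto_top_direction:
  assumes "c > 0" and away: "eventually (\<lambda>n. c \<le> \<bar>inner x (w n)\<bar>) sequentially"
  shows "(\<lambda>n. proj_pt (h n *v x) - proj_pt (h n *v w n)) \<longlonglongrightarrow> 0"
proof -
  have "(\<lambda>n. proj_pt (h n *v x) - proj_pt (inner x (w n) *\<^sub>R (h n *v w n))) \<longlonglongrightarrow> 0"
  proof (rule proj_pt_diff_tendsto_0)
    show "(\<lambda>n. h n *v x - inner x (w n) *\<^sub>R (h n *v w n)) \<longlonglongrightarrow> 0"
      using remainder_tendsto_0[OF filterlim_ident] .
    show "norm (inner x (w n) *\<^sub>R (h n *v w n)) \<le> norm x" for n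
      using Cauchy_Schwarz_ineq2[of x "w n"] norm_w norm_h_w by simp
    show "eventually (\<lambda>n. c \<le> norm (inner x (w n) *\<^sub>R (h n *v w n))) sequentially"
      using away norm_h_w by simp
  qed fact
  moreover have "eventually (\<lambda>n. inner x (w n) \<noteq> 0) sequentially"
    using away \<open>c > 0\<close> by (auto elim: eventually_mono)
  then have "eventually (\<lambda>n. proj_pt (h n *v x) - proj_pt (inner x (w n) *\<^sub>R (h n *v w n))
      = proj_pt (h n *v x) - proj_pt (h n *v w n)) sequentially"
    by eventually_elim (simp add: proj_pt_scaleR)
  ultimately show ?thesis by (rule Lim_transform_eventually)
qed

end

lemma asymptotically_rank_one_normalization:
  fixes g :: "nat \<Rightarrow> real^'n^'n"
  assumes "CARD('n) \<ge> 2" "\<And>n. det (g n) \<noteq> 0"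
    and "filterlim (\<lambda>n. mu12 (g n)) at_top sequentially"
  shows "asymptotically_rank_one (\<lambda>n. inverse (norm (g n *v max_stretch (g n))) *\<^sub>R g n)
    (\<lambda>n. max_stretch (g n)) (\<lambda>n. sigma 2 (g n) / sigma 1 (g n))"
proof -
  note sv = singular_value_bounds[OF assms(1,2)]
  have s1_pos: "0 < sigma 1 (g n)" for n using sv(1,2)[of n] by linarith
  have N_pos: "0 < norm (g n *v max_stretch (g n))" for n using s1_pos[of n] sv(3)[of n] by linarith
  have "filterlim (\<lambda>n. - mu12 (g n)) at_bot sequentially"
    using assms(3) by (simp add: filterlim_uminus_at_bot)
  then have "(\<lambda>n. exp (- mu12 (g n))) \<longlonglongrightarrow> 0"
    by (rule filterlim_compose[OF exp_at_bot])
  moreover have "exp (- mu12 (g n)) = sigma 2 (g n) / sigma 1 (g n)" for n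
    using sv(1)[of n] s1_pos[of n] by (simp add: mu12_def exp_diff)
  ultimately have ratio: "(\<lambda>n. sigma 2 (g n) / sigma 1 (g n)) \<longlonglongrightarrow> 0" by simp
  show ?thesis
  proof
    fix n y
    show "norm (max_stretch (g n)) = 1" by (rule max_stretch)
    show "norm ((inverse (norm (g n *v max_stretch (g n))) *\<^sub>R g n) *v max_stretch (g n)) = 1"
      using N_pos[of n] by (simp flip: scaleR_matrix_vector_assoc)
    show "0 \<le> sigma 2 (g n) / sigma 1 (g n)" using sv(1)[of n] s1_pos[of n] by simp
    assume "inner (max_stretch (g n)) y = 0"
    then have "norm (g n *v y) \<le> sigma 2 (g n) / sigma 1 (g n) * sigma 1 (g n) * norm y"
      using sv(4) s1_pos[of n] by simp
    also have "\<dots> \<le> sigma 2 (g n) / sigma 1 (g n) * norm (g n *v max_stretch (g n)) * norm y"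
      using sv(1,3)[of n] s1_pos[of n] by (intro mult_right_mono mult_left_mono) simp_all
    finally have "norm (g n *v y) \<le> sigma 2 (g n) / sigma 1 (g n) * norm (g n *v max_stretch (g n)) * norm y" .
    then show "norm ((inverse (norm (g n *v max_stretch (g n))) *\<^sub>R g n) *v y)
        \<le> sigma 2 (g n) / sigma 1 (g n) * norm y"
      using N_pos[of n] by (simp add: field_simps flip: scaleR_matrix_vector_assoc)
  qed (fact ratio)
qed

theorem lemma7p1:
  fixes \<Omega> :: "(real^'n^'n) set" and g :: "nat \<Rightarrow> real^'n^'n" and v :: "real^'n"
  assumes "CARD('n) \<ge> 2"
    and "properly_convex_domain \<Omega>"
    and "\<forall>n. det (g n) = 1 \<or> det (g n) = -1"
    and "\<forall>n. proj_act (g n) ` \<Omega> = \<Omega>"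
    and "filterlim (\<lambda>n. mu12 (g n)) at_top sequentially"
    and "v \<noteq> 0" and "proj_pt v \<in> \<Omega>"
  shows "acc_pts (\<lambda>n. proj_pt (g n *v v)) = acc_pts (\<lambda>n. E1 (g n))"
proof -
  obtain C a where "open C" "convex C" "0 \<notin> C" and cone: "\<forall>u\<in>C. \<forall>t>0. t *\<^sub>R u \<in> C"
    and \<Omega>: "\<Omega> = proj_pt ` C" and chart: "\<forall>u \<in> closure C - {0}. inner a u \<noteq> 0"
    using assms(2) by (rule properly_convex_domainE)
  obtain x where "x \<in> C" "proj_pt v = proj_pt x" using assms(7) \<Omega> by auto
  then obtain c where "c \<noteq> 0" "v = c *\<^sub>R x" using assms(6) proj_pt_eq_imp_scaleR by metis
  have "det (g n) \<noteq> 0" for n using assms(3) by (metis zero_neq_neg_one zero_neq_one)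
  define N where "N n = inverse (norm (g n *v max_stretch (g n)))" for n
  define h where "h n = N n *\<^sub>R g n" for n
  interpret asymptotically_rank_one h "\<lambda>n. max_stretch (g n)" "\<lambda>n. sigma 2 (g n) / sigma 1 (g n)"
    unfolding h_def N_def by (rule asymptotically_rank_one_normalization[OF assms(1) \<open>det (g _) \<noteq> 0\<close> assms(5)])
  have "N n \<noteq> 0" for n using norm_h_w[of n] by (auto simp: h_def)
  have "h n *v y \<in> C \<union> uminus ` C" if "y \<in> C" for n y
    using proj_invariant_cone_image[OF cone \<open>0 \<notin> C\<close> _ that] assms(4)
    by (simp add: h_def proj_act_scaleR[OF \<open>N n \<noteq> 0\<close>] \<Omega>)
  then obtain c\<^sub>0 where "c\<^sub>0 > 0" "eventually (\<lambda>n. c\<^sub>0 \<le> \<bar>inner x (max_stretch (g n))\<bar>) sequentially"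
    using inner_top_direction_bounded_away[OF \<open>open C\<close> \<open>convex C\<close> \<open>0 \<notin> C\<close> \<open>x \<in> C\<close> chart] by blast
  then have "(\<lambda>n. proj_pt (h n *v x) - proj_pt (h n *v max_stretch (g n))) \<longlonglongrightarrow> 0"
    by (rule proj_pt_tendsto_top_direction)
  moreover have "proj_pt (h n *v x) = proj_pt (g n *v v)" "proj_pt (h n *v max_stretch (g n)) = E1 (g n)" for n
    using \<open>N n \<noteq> 0\<close> \<open>c \<noteq> 0\<close> \<open>v = c *\<^sub>R x\<close>
    by (simp_all add: h_def E1_eq_proj_pt_max_stretch proj_pt_scaleR matrix_vector_mult_scaleR
        flip: scaleR_matrix_vector_assoc)
  ultimately show ?thesis by (simp add: acc_pts_eq_if_diff_tendsto_0)
qed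

end
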